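(* Let $f$ be a homeomorphism of a compact, connected, separable metric space $\mathcal M$, and assume that $\mathcal M$ is not a chain-transitive set for $f$. If a CRH-attractor $A$ of $f$ and a CRH-repeller $R$ of $f$ have non-empty intersection, then $A=R$, and this set is a reversible core of $f$.
   Context: An $\varepsilon$-orbit of $f$ is a finite sequence $x_1,\dots,x_N$ with $\mathrm{dist}(f(x_j),x_{j+1})<\varepsilon$ for $j=1,\dots,N-1$; it connects $x_1$ to $x_N$. A closed invariant set $\Lambda$ is chain-transitive if for every $\varepsilon>0$ and all $x,y\in\Lambda$ there is an $\varepsilon$-orbit lying in $\Lambda$ connecting $x$ to $y$. A closed invariant set $A$ is stable if for every $\delta>0$ there is $\varepsilon>0$ such that no $\varepsilon$-orbit starting in $A$ leaves the $\delta$-neighbourhood of $A$. A CRH-attractor of $f$ is a closed invariant set that is chain-transitive and stable; a CRH-repeller of $f$ is a CRH-attractor of $f^{-1}$. A CRH-attractor $A$ is a dissipative attractor if there exists a point $x\notin A$ such that for every $\varepsilon>0$ some $\varepsilon$-orbit connects $x$ to a point of $A$; otherwise $A$ is called a reversible core. *)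

theory Defs
  imports "HOL-Analysis.Analysis"
begin

definition eps_orbit :: "('a::metric_space \<Rightarrow> 'a) \<Rightarrow> real \<Rightarrow> 'a list \<Rightarrow> bool" where
  "eps_orbit f e xs \<longleftrightarrow> xs \<noteq> [] \<and>
     (\<forall>j. Suc j < length xs \<longrightarrow> dist (f (xs ! j)) (xs ! Suc j) < e)"

definition invariant_set :: "('a \<Rightarrow> 'a) \<Rightarrow> 'a set \<Rightarrow> bool" where
  "invariant_set f A \<longleftrightarrow> f ` A = A"

definition chain_transitive :: "('a::metric_space \<Rightarrow> 'a) \<Rightarrow> 'a set \<Rightarrow> bool" where
  "chain_transitive f L \<longleftrightarrow> closed L \<and> invariant_set f L \<and>
     (\<forall>e>0. \<forall>x\<in>L. \<forall>y\<in>L. \<exists>xs. eps_orbit f e xs \<and> set xs \<subseteq> L \<and> hd xs = x \<and> last xs = y)"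

definition nbhd :: "'a::metric_space set \<Rightarrow> real \<Rightarrow> 'a set" where
  "nbhd A d = {x. \<exists>a\<in>A. dist x a < d}"

definition stable_set :: "('a::metric_space \<Rightarrow> 'a) \<Rightarrow> 'a set \<Rightarrow> bool" where
  "stable_set f A \<longleftrightarrow> closed A \<and> invariant_set f A \<and>
     (\<forall>d>0. \<exists>e>0. \<forall>xs. eps_orbit f e xs \<and> hd xs \<in> A \<longrightarrow> set xs \<subseteq> nbhd A d)"

definition crh_attractor :: "('a::metric_space \<Rightarrow> 'a) \<Rightarrow> 'a set \<Rightarrow> bool" where
  "crh_attractor f A \<longleftrightarrow> closed A \<and> invariant_set f A \<and> chain_transitive f A \<and> stable_set f A"

definition crh_repeller :: "('a::metric_space \<Rightarrow> 'a) \<Rightarrow> 'a set \<Rightarrow> bool" where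
  "crh_repeller f R \<longleftrightarrow> crh_attractor (inv f) R"

definition dissipative_attractor :: "('a::metric_space \<Rightarrow> 'a) \<Rightarrow> 'a set \<Rightarrow> bool" where
  "dissipative_attractor f A \<longleftrightarrow> crh_attractor f A \<and>
     (\<exists>x. x \<notin> A \<and> (\<forall>e>0. \<exists>xs. eps_orbit f e xs \<and> hd xs = x \<and> last xs \<in> A))"

definition reversible_core :: "('a::metric_space \<Rightarrow> 'a) \<Rightarrow> 'a set \<Rightarrow> bool" where
  "reversible_core f A \<longleftrightarrow> crh_attractor f A \<and> \<not> dissipative_attractor f A"

end

theory Submission
  imports Defs
begin

text \<open>A CRH-attractor and a CRH-repeller are absorbing for chains of $f$ and of $f^{-1}$
  respectively. If a chain of $f$ from $x$ ends in the repeller $R$, reversing it gives a chain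
  of $f^{-1}$ (with a slightly larger jump, by uniform continuity of $f^{-1}$ on the compact
  space) from $R$ to $x$, so stability of $R$ under $f^{-1}$ forces $x \in R$. Chain
  transitivity of $A$ through a common point then gives $A \subseteq R$, symmetrically
  $R \subseteq A$, and the same reversal shows that no point outside $A = R$ chains into $A$.\<close>

definition chain_connects :: "('a::metric_space \<Rightarrow> 'a) \<Rightarrow> 'a set \<Rightarrow> 'a set \<Rightarrow> bool" where
  "chain_connects f X Y \<longleftrightarrow>
     (\<forall>e>0. \<exists>xs. eps_orbit f e xs \<and> hd xs \<in> X \<and> last xs \<in> Y)"

lemma chain_connects_mono:
  "chain_connects f X Y \<Longrightarrow> X \<subseteq> X' \<Longrightarrow> Y \<subseteq> Y' \<Longrightarrow> chain_connects f X' Y'"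
  unfolding chain_connects_def by blast

lemma chain_transitive_chain_connects:
  "chain_transitive f L \<Longrightarrow> x \<in> L \<Longrightarrow> y \<in> L \<Longrightarrow> chain_connects f {x} {y}"
  unfolding chain_transitive_def chain_connects_def by fastforce

lemma stable_set_chain_connects_into:
  assumes "stable_set f A" and "chain_connects f A {y}"
  shows "y \<in> A"
proof -
  have "y \<in> closure A"
    unfolding closure_approachable
  proof (intro allI impI)
    fix d :: real assume "d > 0"
    then obtain e where "e > 0" and trap: "\<forall>xs. eps_orbit f e xs \<and> hd xs \<in> A \<longrightarrow> set xs \<subseteq> nbhd A d"
      using assms(1) unfolding stable_set_def by blast
    then obtain xs where xs: "eps_orbit f e xs" "hd xs \<in> A" "last xs = y"
      using assms(2) unfolding chain_connects_def by blast
    then have "y \<in> set xs" unfolding eps_orbit_def by auto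
    with trap xs have "y \<in> nbhd A d" by blast
    then show "\<exists>a\<in>A. dist a y < d" unfolding nbhd_def by (auto simp: dist_commute)
  qed
  moreover have "closed A" using assms(1) unfolding stable_set_def by blast
  ultimately show ?thesis by simp
qed

lemma eps_orbit_rev:
  assumes modulus: "\<And>u v. dist u v < d \<Longrightarrow> dist (g u) (g v) < e"
    and left_inverse: "\<And>x. g (f x) = x"
    and "eps_orbit f d xs"
  shows "eps_orbit g e (rev xs)"
  unfolding eps_orbit_def
proof (intro conjI allI impI)
  show "rev xs \<noteq> []" using assms(3) unfolding eps_orbit_def by simp
next
  fix j assume "Suc j < length (rev xs)"
  define k where "k = length xs - Suc (Suc j)"
  have k: "Suc k < length xs" "rev xs ! j = xs ! Suc k" "rev xs ! Suc j = xs ! k"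
    using \<open>Suc j < length (rev xs)\<close> by (auto simp: k_def rev_nth Suc_diff_Suc)
  then have "dist (f (xs ! k)) (xs ! Suc k) < d" using assms(3) unfolding eps_orbit_def by blast
  then have "dist (g (f (xs ! k))) (g (xs ! Suc k)) < e" by (rule modulus)
  then show "dist (g (rev xs ! j)) (rev xs ! Suc j) < e"
    using k left_inverse by (simp add: dist_commute)
qed

lemma chain_connects_rev:
  assumes "uniformly_continuous_on UNIV g" and "\<And>x. g (f x) = x"
    and "chain_connects f X Y"
  shows "chain_connects g Y X"
  unfolding chain_connects_def
proof (intro allI impI)
  fix e :: real assume "e > 0"
  then obtain d where "d > 0" and modulus: "\<And>u v. dist u v < d \<Longrightarrow> dist (g u) (g v) < e"
    using assms(1) unfolding uniformly_continuous_on_def by (metis UNIV_I dist_commute)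
  then obtain xs where xs: "eps_orbit f d xs" "hd xs \<in> X" "last xs \<in> Y"
    using assms(3) unfolding chain_connects_def by blast
  then have "xs \<noteq> []" unfolding eps_orbit_def by blast
  with xs show "\<exists>ys. eps_orbit g e ys \<and> hd ys \<in> Y \<and> last ys \<in> X"
    using eps_orbit_rev[OF modulus assms(2) xs(1)] by (auto simp: hd_rev last_rev)
qed

lemma backward_stable_set_chain_connects_from:
  assumes "uniformly_continuous_on UNIV g" and "\<And>x. g (f x) = x"
    and "stable_set g R" and "chain_connects f {x} R"
  shows "x \<in> R"
  using assms by (meson chain_connects_rev stable_set_chain_connects_into)

lemma chain_transitive_subset_backward_stable:
  assumes "uniformly_continuous_on UNIV g" and "\<And>x. g (f x) = x"
    and "chain_transitive f A" and "stable_set g R" and "p \<in> A \<inter> R"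
  shows "A \<subseteq> R"
proof
  fix a assume "a \<in> A"
  with assms(3,5) have "chain_connects f {a} {p}"
    by (simp add: chain_transitive_chain_connects)
  then have "chain_connects f {a} R"
    by (rule chain_connects_mono) (use assms(5) in auto)
  with assms(1,2,4) show "a \<in> R" by (rule backward_stable_set_chain_connects_from)
qed

theorem theorem2:
  fixes f :: "'a::metric_space \<Rightarrow> 'a" and A R :: "'a set"
  assumes "compact (UNIV :: 'a set)"
    and "connected (UNIV :: 'a set)"
    and "\<exists>D::'a set. countable D \<and> closure D = UNIV"
    and "homeomorphism (UNIV :: 'a set) UNIV f (inv f)"
    and "\<not> chain_transitive f UNIV"
    and "crh_attractor f A"
    and "crh_repeller f R"
    and "A \<inter> R \<noteq> {}"
  shows "A = R \<and> reversible_core f A"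
proof -
  have inverses: "\<And>x. inv f (f x) = x" "\<And>x. f (inv f x) = x"
    using assms(4) unfolding homeomorphism_def by auto
  have uc: "uniformly_continuous_on UNIV f" "uniformly_continuous_on UNIV (inv f)"
    using assms(1,4) compact_uniformly_continuous unfolding homeomorphism_def by blast+
  have A: "chain_transitive f A" "stable_set f A"
    and R: "chain_transitive (inv f) R" "stable_set (inv f) R"
    using assms(6,7) unfolding crh_repeller_def crh_attractor_def by auto
  obtain p where "p \<in> A \<inter> R" using assms(8) by blast
  then have "A = R"
    using chain_transitive_subset_backward_stable[OF uc(2) inverses(1) A(1) R(2)]
      chain_transitive_subset_backward_stable[OF uc(1) inverses(2) R(1) A(2)] by auto
  moreover have "\<not> dissipative_attractor f A"
  proof
    assume "dissipative_attractor f A"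
    then obtain x where "x \<notin> A" and "chain_connects f {x} A"
      unfolding dissipative_attractor_def chain_connects_def by auto
    with \<open>A = R\<close> show False
      using backward_stable_set_chain_connects_from[OF uc(2) inverses(1) R(2)] by blast
  qed
  ultimately show ?thesis using assms(6) unfolding reversible_core_def by blast
qed

end
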